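(* For $\alpha\in(0,\pi)$ let $\widehat{\mathfrak{K}}_\alpha$ denote the analytic extension to $\mathbb{C}\setminus\mathfrak{S}$, where $\mathfrak{S}:=(1/4+\mathbb{N})\cup(-1/4-\mathbb{N})$, of the Mellin transform $\lambda\mapsto\int_0^\infty\mathfrak{K}_\alpha(r)r^{-\lambda}\,dr/r$ of $\mathfrak{K}_\alpha(\tau):=\big(4\sin^2(\alpha)+(\sqrt\tau-1/\sqrt\tau)^2\big)^{-1/4}$. Then for all $\mu\in\mathbb{R}$ and all $p\ge0$, $$\lim_{\xi\to+\infty}|\widehat{\mathfrak{K}}_\alpha(\mu\pm\imath\xi)|^2|\xi|^{2p}=0.$$
   Context: The Mellin transform $\lambda\mapsto\int_0^\infty\mathfrak{K}_\alpha(r)r^{-\lambda}dr/r$ converges and is analytic for $|\mathrm{Re}\,\lambda|<1/4$ and admits an analytic extension to $\mathbb{C}\setminus\mathfrak{S}$ with simple poles at the points of $\mathfrak{S}$; $\mathbb{N}=\{0,1,2,\dots\}$. *)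

theory Defs
  imports "HOL-Complex_Analysis.Complex_Analysis"
begin

definition Kfrak :: "real \<Rightarrow> real \<Rightarrow> real" where
  "Kfrak \<alpha> \<tau> = (4 * (sin \<alpha>)\<^sup>2 + (sqrt \<tau> - 1 / sqrt \<tau>)\<^sup>2) powr (-1/4)"

definition mellinK :: "real \<Rightarrow> complex \<Rightarrow> complex" where
  "mellinK \<alpha> s =
     set_lebesgue_integral lborel {0<..}
       (\<lambda>r. complex_of_real (Kfrak \<alpha> r) * (complex_of_real r powr (-s)) / complex_of_real r)"

definition Sfrak :: "complex set" where
  "Sfrak = {complex_of_real (1/4 + real n) | n. True} \<union> {complex_of_real (-1/4 - real n) | n. True}"

end

theory Submission
  imports Defs "HOL-Computational_Algebra.Polynomial"
begin

text \<open>Write \<open>c = 2 cos 2\<alpha>\<close>, so that \<open>-2 \<le> c < 2\<close> and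
  \<open>K\<^sub>\<alpha>(t) = t powr (1/4) * (t\<^sup>2 - c t + 1) powr (-1/4)\<close>. For the functions
  \<open>t powr a * (t\<^sup>2 - c t + 1) powr b * R t\<close> with a polynomial \<open>R\<close>, the Euler operator \<open>t d/dt\<close> stays
  inside the family without changing the strip of convergence of the Mellin transform, and
  integration by parts turns it into multiplication by \<open>s\<close>. Hence their Mellin transforms decay
  faster than any power of \<open>Im s\<close> on every vertical line of that strip.

  The functions \<open>(t d/dt \<plusminus> 1/4) K\<^sub>\<alpha>\<close> belong to the family, with strips \<open>(-5/4, 1/4)\<close> and
  \<open>(-1/4, 5/4)\<close>. By analytic continuation (off the real axis, where the poles are) their Mellin
  transforms are \<open>(s \<plusminus> 1/4) Khat s\<close>, which gives rapid decay of \<open>Khat\<close> on the lines with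
  \<open>\<bar>Re s\<bar> < 5/4\<close>. The same identities produce the recurrence
  \<open>(s + 3/4) Khat (s + 1) + (s - 3/4) Khat (s - 1) = c s Khat s\<close>, which propagates the decay
  from these lines to all vertical lines.\<close>

section \<open>Mellin transforms of functions with power bounds\<close>

definition piecewise_powr :: "real \<Rightarrow> real \<Rightarrow> real \<Rightarrow> real" where
  "piecewise_powr a b r = (if r \<le> 1 then r powr a else r powr b)"

lemma piecewise_powr_nonneg [simp]: "0 \<le> piecewise_powr a b r"
  by (simp add: piecewise_powr_def)

lemma piecewise_powr_mult:
  "piecewise_powr a b r * piecewise_powr c d r = piecewise_powr (a + c) (b + d) r"
  by (simp add: piecewise_powr_def powr_add)

lemma borel_measurable_piecewise_powr [measurable]: "piecewise_powr a b \<in> borel_measurable borel"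
  unfolding piecewise_powr_def by measurable

lemma powr_le_piecewise_powr:
  fixes r x :: real
  assumes "0 < r" "l \<le> x" "x \<le> u"
  shows "r powr x \<le> piecewise_powr l u r"
proof (cases "r \<le> 1")
  case True
  then show ?thesis using assms by (simp add: piecewise_powr_def powr_mono')
qed (use assms in \<open>simp add: piecewise_powr_def powr_mono\<close>)

lemma abs_ln_le_piecewise_powr:
  assumes "0 < r" "0 < d"
  shows "\<bar>ln r\<bar> \<le> piecewise_powr (- d) d r / d"
proof -
  have ln_le: "ln x \<le> x powr d / d" if "0 < x" for x
  proof -
    have "d * ln x = ln (x powr d)" using that by (simp add: ln_powr)
    also have "\<dots> \<le> x powr d" using that by (intro ln_le_minus_one[THEN order_trans]) auto
    finally show ?thesis using assms by (simp add: field_simps)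
  qed
  show ?thesis
  proof (cases "r \<le> 1")
    case True
    have "ln (1 / r) \<le> (1 / r) powr d / d" using assms by (intro ln_le) auto
    then show ?thesis using True assms by (simp add: piecewise_powr_def ln_div powr_divide powr_minus_divide)
  qed (use ln_le[OF assms(1)] in \<open>auto simp: piecewise_powr_def\<close>)
qed

lemma piecewise_powr_tendsto_0_at_right:
  assumes "0 < a"
  shows "(piecewise_powr a b \<longlongrightarrow> 0) (at_right 0)"
proof -
  have "\<forall>\<^sub>F r in at_right 0. r powr a = piecewise_powr a b r"
    unfolding eventually_at_right_field by (intro exI[of _ 1]) (auto simp: piecewise_powr_def)
  moreover have "((\<lambda>r. r powr a) \<longlongrightarrow> 0) (at_right (0::real))"
    using assms by (intro tendsto_eq_intros) (auto simp: eventually_at_right_field intro: exI[of _ 1])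
  ultimately show ?thesis by (rule Lim_transform_eventually[rotated])
qed

lemma piecewise_powr_tendsto_0_at_top:
  assumes "b < 0"
  shows "(piecewise_powr a b \<longlongrightarrow> 0) at_top"
proof -
  have "\<forall>\<^sub>F r in at_top. r powr b = piecewise_powr a b r"
    unfolding eventually_at_top_linorder by (intro exI[of _ 2]) (auto simp: piecewise_powr_def)
  moreover have "((\<lambda>r. r powr b) \<longlongrightarrow> 0) at_top"
    using assms by (intro tendsto_neg_powr filterlim_ident)
  ultimately show ?thesis by (rule Lim_transform_eventually[rotated])
qed

lemma set_integrable_piecewise_powr:
  assumes "-1 < a" "b < -1"
  shows "set_integrable lborel {0<..} (piecewise_powr a b)"
proof -
  have "((\<lambda>x. x powr a) has_integral (1 / (a + 1))) {0..1}"
    using has_integral_powr_from_0[OF assms(1), of 1] by simp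
  then have "piecewise_powr a b integrable_on {0..1}"
    by (rule has_integral_integrable[OF has_integral_eq[rotated]]) (simp add: piecewise_powr_def)
  moreover have "((\<lambda>x. x powr b) has_integral (- 1 / (b + 1))) {1..}"
    using has_integral_powr_to_inf[OF assms(2), of 1] by simp
  then have "piecewise_powr a b integrable_on {1..}"
    by (rule has_integral_integrable[OF has_integral_spike[where S = "{1}", rotated 2]])
       (auto simp: piecewise_powr_def)
  ultimately have "piecewise_powr a b integrable_on {0..}"
    by (rule integrable_Un') (auto intro: negligible_subset[of "{1}"])
  then have "piecewise_powr a b integrable_on {0<..}"
    by (rule integrable_spike_set) (auto intro: negligible_subset[of "{0}"])
  then have "piecewise_powr a b absolutely_integrable_on {0<..}"
    by (intro nonnegative_absolutely_integrable_1) auto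
  then show ?thesis
    unfolding set_integrable_def by (subst integrable_completion[symmetric]) auto
qed

lemma set_integral_difference_quotients_tendsto:
  fixes F F' :: "complex \<Rightarrow> 'a \<Rightarrow> complex"
  assumes integrable: "\<And>w. w \<in> ball z \<delta> \<Longrightarrow> set_integrable M A (F w)"
    and measurable: "set_borel_measurable M A (F' z)"
    and deriv: "\<And>x w. x \<in> A \<Longrightarrow> w \<in> ball z \<delta> \<Longrightarrow> ((\<lambda>w. F w x) has_field_derivative F' w x) (at w)"
    and bound: "\<And>x w. x \<in> A \<Longrightarrow> w \<in> ball z \<delta> \<Longrightarrow> norm (F' w x) \<le> W x"
    and "set_integrable M A W"
    and X: "\<And>i. X i \<in> ball z \<delta> - {z}" "X \<longlonglongrightarrow> z"
  shows "(\<lambda>i. LINT x:A|M. (F (X i) x - F z x) / (X i - z)) \<longlonglongrightarrow> (LINT x:A|M. F' z x)"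
  unfolding set_lebesgue_integral_def
proof (rule integral_dominated_convergence[where w = "\<lambda>x. indicator A x *\<^sub>R W x"])
  have z: "z \<in> ball z \<delta>"
    using X(1)[of 0] zero_le_dist[of z "X 0"] by (simp del: zero_le_dist)
  show "(\<lambda>x. indicator A x *\<^sub>R F' z x) \<in> borel_measurable M"
    using measurable by (simp add: set_borel_measurable_def)
  have "set_integrable M A (\<lambda>x. (F (X i) x - F z x) / (X i - z))" for i
    using X z by (intro set_integrable_divide set_integral_diff integrable) auto
  then show "(\<lambda>x. indicator A x *\<^sub>R ((F (X i) x - F z x) / (X i - z))) \<in> borel_measurable M" for i
    unfolding set_integrable_def by (rule borel_measurable_integrable)
  show "integrable M (\<lambda>x. indicator A x *\<^sub>R W x)"
    using \<open>set_integrable M A W\<close> by (simp add: set_integrable_def)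
  have "(\<lambda>i. (F (X i) x - F z x) / (X i - z)) \<longlonglongrightarrow> F' z x" if "x \<in> A" for x
  proof -
    have "((\<lambda>w. (F w x - F z x) / (w - z)) \<longlongrightarrow> F' z x) (at z)"
      using deriv[OF that z] by (simp add: has_field_derivative_iff)
    then show ?thesis
      using X by (auto simp: tendsto_at_iff_sequentially o_def)
  qed
  then show "AE x in M. (\<lambda>i. indicator A x *\<^sub>R ((F (X i) x - F z x) / (X i - z))) \<longlonglongrightarrow>
      indicator A x *\<^sub>R F' z x"
    by (intro AE_I2) (auto split: split_indicator)
  have "norm ((F (X i) x - F z x) / (X i - z)) \<le> W x" if "x \<in> A" for i x
  proof -
    have "norm (F (X i) x - F z x) \<le> W x * norm (X i - z)"
      using X z deriv[OF that] bound[OF that]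
      by (intro field_differentiable_bound[of "ball z \<delta>"]) (auto intro: has_field_derivative_at_within)
    then show ?thesis using X(1)[of i] by (simp add: norm_divide divide_le_eq)
  qed
  then show "AE x in M. norm (indicator A x *\<^sub>R ((F (X i) x - F z x) / (X i - z))) \<le>
      indicator A x *\<^sub>R W x" for i
    by (intro AE_I2) (auto split: split_indicator)
qed

lemma has_field_derivative_set_integral:
  fixes F F' :: "complex \<Rightarrow> 'a \<Rightarrow> complex"
  assumes "0 < \<delta>"
    and integrable: "\<And>w. w \<in> ball z \<delta> \<Longrightarrow> set_integrable M A (F w)"
    and measurable: "set_borel_measurable M A (F' z)"
    and deriv: "\<And>x w. x \<in> A \<Longrightarrow> w \<in> ball z \<delta> \<Longrightarrow> ((\<lambda>w. F w x) has_field_derivative F' w x) (at w)"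
    and bound: "\<And>x w. x \<in> A \<Longrightarrow> w \<in> ball z \<delta> \<Longrightarrow> norm (F' w x) \<le> W x"
    and "set_integrable M A W"
  shows "((\<lambda>w. LINT x:A|M. F w x) has_field_derivative (LINT x:A|M. F' z x)) (at z)"
proof -
  let ?I = "\<lambda>w. LINT x:A|M. F w x"
  have z: "z \<in> ball z \<delta>" using \<open>0 < \<delta>\<close> by simp
  have "((\<lambda>w. (?I w - ?I z) / (w - z)) \<longlongrightarrow> (LINT x:A|M. F' z x)) (at z within ball z \<delta>)"
  proof (subst tendsto_at_iff_sequentially, intro allI impI)
    fix X assume X: "\<forall>i. X i \<in> ball z \<delta> - {z}" "X \<longlonglongrightarrow> z"
    have "(?I (X i) - ?I z) / (X i - z) = (LINT x:A|M. (F (X i) x - F z x) / (X i - z))" for i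
      using X integrable z by (simp add: set_integral_diff)
    then show "((\<lambda>w. (?I w - ?I z) / (w - z)) \<circ> X) \<longlonglongrightarrow> (LINT x:A|M. F' z x)"
      using set_integral_difference_quotients_tendsto[OF assms(2-6)] X by (simp add: o_def)
  qed
  moreover have "at z within ball z \<delta> = at z" by (rule at_within_open[OF z open_ball])
  ultimately show ?thesis by (simp add: has_field_derivative_iff)
qed

definition mellin_integrand :: "(real \<Rightarrow> real) \<Rightarrow> complex \<Rightarrow> real \<Rightarrow> complex" where
  "mellin_integrand g s r = of_real (g r) * of_real r powr (- s) / of_real r"

definition mellin :: "(real \<Rightarrow> real) \<Rightarrow> complex \<Rightarrow> complex" where
  "mellin g s = (LINT r:{0<..}|lborel. mellin_integrand g s r)"

text \<open>\<open>g r = O(r powr a)\<close> as \<open>r \<rightarrow> 0\<close> and \<open>g r = O(r powr b)\<close> as \<open>r \<rightarrow> \<infinity>\<close>, so that the Mellin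
  integral of \<open>g\<close> converges absolutely on the strip \<open>b < Re s < a\<close>.\<close>
definition mellin_dominated :: "(real \<Rightarrow> real) \<Rightarrow> real \<Rightarrow> real \<Rightarrow> bool" where
  "mellin_dominated g a b \<longleftrightarrow>
     continuous_on {0<..} g \<and> (\<exists>C. \<forall>r>0. \<bar>g r\<bar> \<le> C * piecewise_powr a b r)"

lemma of_real_powr_eq_exp: "0 < r \<Longrightarrow> complex_of_real r powr z = exp (z * of_real (ln r))"
  by (simp add: powr_def Ln_of_real)

lemma norm_mellin_integrand:
  "0 < r \<Longrightarrow> norm (mellin_integrand g s r) = \<bar>g r\<bar> * r powr (- Re s - 1)"
  by (simp add: mellin_integrand_def norm_mult norm_divide norm_powr_real_powr powr_diff)

lemma norm_mellin_integrand_le: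
  assumes "\<And>r. 0 < r \<Longrightarrow> \<bar>g r\<bar> \<le> C * piecewise_powr a b r" "0 < r" "l \<le> Re s" "Re s \<le> u"
  shows "norm (mellin_integrand g s r) \<le> C * piecewise_powr (a - u - 1) (b - l - 1) r"
proof -
  have "r powr (- Re s - 1) \<le> piecewise_powr (- u - 1) (- l - 1) r"
    using assms by (intro powr_le_piecewise_powr) auto
  then have "norm (mellin_integrand g s r) \<le> C * piecewise_powr a b r * piecewise_powr (- u - 1) (- l - 1) r"
    unfolding norm_mellin_integrand[OF \<open>0 < r\<close>] using assms(1)[OF assms(2)]
    by (intro mult_mono) (auto intro: order_trans[OF abs_ge_zero])
  then show ?thesis by (simp add: mult.assoc piecewise_powr_mult algebra_simps)
qed

lemma continuous_on_mellin_integrand: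
  assumes "continuous_on {0<..} g"
  shows "continuous_on {0<..} (mellin_integrand g s)"
proof -
  have "continuous_on {0<..} (\<lambda>r. of_real (g r) * exp (- s * of_real (ln r)) / of_real r)"
    using assms by (intro continuous_intros) auto
  then show ?thesis
    by (rule continuous_on_cong[THEN iffD1, rotated 2]) (auto simp: mellin_integrand_def of_real_powr_eq_exp)
qed

lemma set_borel_measurable_continuous_on:
  fixes f :: "real \<Rightarrow> complex"
  assumes "continuous_on {0<..} f"
  shows "set_borel_measurable lborel {0<..} f"
  unfolding set_borel_measurable_def
  using borel_measurable_continuous_on_indicator[OF _ assms] by simp

lemma mellin_integrable:
  assumes "mellin_dominated g a b" "b < Re s" "Re s < a"
  shows "set_integrable lborel {0<..} (mellin_integrand g s)"
proof -
  obtain C where C: "\<And>r. 0 < r \<Longrightarrow> \<bar>g r\<bar> \<le> C * piecewise_powr a b r"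
    using assms(1) by (auto simp: mellin_dominated_def)
  show ?thesis
  proof (rule set_integrable_bound)
    show "set_integrable lborel {0<..} (\<lambda>r. C * piecewise_powr (a - Re s - 1) (b - Re s - 1) r)"
      using assms by (intro set_integrable_mult_right set_integrable_piecewise_powr) auto
    show "set_borel_measurable lborel {0<..} (mellin_integrand g s)"
      using assms(1) by (intro set_borel_measurable_continuous_on continuous_on_mellin_integrand)
        (simp add: mellin_dominated_def)
    have "norm (mellin_integrand g s r) \<le> norm (C * piecewise_powr (a - Re s - 1) (b - Re s - 1) r)"
      if "0 < r" for r
      using norm_mellin_integrand_le[OF C that, where l = "Re s" and s = s and u = "Re s"]
      by (simp add: order_trans)
    then show "AE r in lborel. r \<in> {0<..} \<longrightarrow>
        norm (mellin_integrand g s r) \<le> norm (C * piecewise_powr (a - Re s - 1) (b - Re s - 1) r)"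
      by (intro AE_I2) auto
  qed
qed

lemma mellin_bounded_on_line:
  assumes "mellin_dominated g a b" "b < \<mu>" "\<mu> < a"
  obtains B where "\<And>s. Re s = \<mu> \<Longrightarrow> norm (mellin g s) \<le> B"
proof -
  obtain C where C: "\<And>r. 0 < r \<Longrightarrow> \<bar>g r\<bar> \<le> C * piecewise_powr a b r"
    using assms(1) by (auto simp: mellin_dominated_def)
  let ?W = "\<lambda>r. C * piecewise_powr (a - \<mu> - 1) (b - \<mu> - 1) r"
  have "norm (mellin g s) \<le> (LINT r:{0<..}|lborel. ?W r)" if "Re s = \<mu>" for s
  proof -
    have integrable: "set_integrable lborel {0<..} (mellin_integrand g s)"
      using assms that by (intro mellin_integrable) auto
    have "norm (mellin g s) \<le> (LINT r:{0<..}|lborel. norm (mellin_integrand g s r))"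
      unfolding mellin_def by (rule set_integral_norm_bound[OF integrable])
    also have "\<dots> \<le> (LINT r:{0<..}|lborel. ?W r)"
      using assms that norm_mellin_integrand_le[OF C, where l = \<mu> and u = \<mu>]
      by (intro set_integral_mono set_integrable_norm integrable set_integrable_mult_right
          set_integrable_piecewise_powr) auto
    finally show ?thesis .
  qed
  then show ?thesis by (rule that)
qed

lemma mellin_dominated_powr_mult:
  assumes "mellin_dominated g a b"
  shows "mellin_dominated (\<lambda>r. r powr x * g r) (a + x) (b + x)"
proof -
  obtain C where C: "\<And>r. 0 < r \<Longrightarrow> \<bar>g r\<bar> \<le> C * piecewise_powr a b r"
    using assms by (auto simp: mellin_dominated_def)
  have "\<bar>r powr x * g r\<bar> \<le> C * piecewise_powr (a + x) (b + x) r" if "0 < r" for r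
  proof -
    have "\<bar>r powr x * g r\<bar> \<le> piecewise_powr x x r * (C * piecewise_powr a b r)"
      using C[OF that] by (simp add: abs_mult piecewise_powr_def mult_left_mono)
    then show ?thesis by (simp add: piecewise_powr_mult[symmetric] ac_simps)
  qed
  moreover have "continuous_on {0<..} (\<lambda>r. r powr x * g r)"
    using assms by (auto simp: mellin_dominated_def intro!: continuous_intros)
  ultimately show ?thesis by (auto simp: mellin_dominated_def)
qed

lemma mellin_cong: "(\<And>r. 0 < r \<Longrightarrow> g r = h r) \<Longrightarrow> mellin g s = mellin h s"
  unfolding mellin_def mellin_integrand_def by (rule set_lebesgue_integral_cong) auto

lemma mellin_scale: "mellin (\<lambda>r. x * g r) s = of_real x * mellin g s"
  unfolding mellin_def mellin_integrand_def
  by (subst set_integral_mult_right[symmetric]) (simp add: mult.assoc)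

lemma mellin_linear:
  assumes "set_integrable lborel {0<..} (mellin_integrand g s)"
    and "set_integrable lborel {0<..} (mellin_integrand h s)"
  shows "mellin (\<lambda>r. x * g r + y * h r) s = of_real x * mellin g s + of_real y * mellin h s"
proof -
  have "mellin (\<lambda>r. x * g r + y * h r) s =
      (LINT r:{0<..}|lborel. of_real x * mellin_integrand g s r + of_real y * mellin_integrand h s r)"
    unfolding mellin_def mellin_integrand_def by (simp add: add_divide_distrib distrib_right mult.assoc)
  also have "\<dots> = of_real x * mellin g s + of_real y * mellin h s"
    using assms unfolding mellin_def by (subst set_integral_add(2)) auto
  finally show ?thesis .
qed

lemma mellin_powr_mult: "mellin (\<lambda>r. r powr x * g r) s = mellin g (s - of_real x)"
  unfolding mellin_def mellin_integrand_def
  by (rule set_lebesgue_integral_cong)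
    (auto simp: powr_of_real[symmetric] powr_diff powr_minus field_simps)

lemma mellin_boundary_tendsto_0:
  assumes "mellin_dominated g a b" "b < Re s" "Re s < a"
  shows "((\<lambda>r. of_real (g r) * of_real r powr (- s)) \<longlongrightarrow> 0) (at_right 0)"
    and "((\<lambda>r. of_real (g r) * of_real r powr (- s)) \<longlongrightarrow> 0) at_top"
proof -
  obtain C where C: "\<And>r. 0 < r \<Longrightarrow> \<bar>g r\<bar> \<le> C * piecewise_powr a b r"
    using assms(1) by (auto simp: mellin_dominated_def)
  let ?B = "\<lambda>r. C * piecewise_powr (a - Re s) (b - Re s) r"
  have bound: "norm (of_real (g r) * of_real r powr (- s)) \<le> ?B r" if "0 < r" for r
  proof -
    have "norm (of_real (g r) * of_real r powr (- s)) = \<bar>g r\<bar> * r powr (- Re s)"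
      using that by (simp add: norm_mult norm_powr_real_powr)
    also have "\<dots> \<le> C * piecewise_powr a b r * piecewise_powr (- Re s) (- Re s) r"
      using that C[OF that] by (intro mult_mono) (auto simp: piecewise_powr_def)
    finally show ?thesis by (simp add: mult.assoc piecewise_powr_mult)
  qed
  show "((\<lambda>r. of_real (g r) * of_real r powr (- s)) \<longlongrightarrow> 0) (at_right 0)"
  proof (rule Lim_null_comparison)
    show "\<forall>\<^sub>F r in at_right 0. norm (of_real (g r) * of_real r powr (- s)) \<le> ?B r"
      unfolding eventually_at_right_field using bound by (intro exI[of _ 1]) auto
    show "(?B \<longlongrightarrow> 0) (at_right 0)"
      using assms tendsto_mult_right_zero[OF piecewise_powr_tendsto_0_at_right] by simp
  qed
  show "((\<lambda>r. of_real (g r) * of_real r powr (- s)) \<longlongrightarrow> 0) at_top"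
  proof (rule Lim_null_comparison)
    show "\<forall>\<^sub>F r in at_top. norm (of_real (g r) * of_real r powr (- s)) \<le> ?B r"
      unfolding eventually_at_top_linorder using bound by (intro exI[of _ 1]) auto
    show "(?B \<longlongrightarrow> 0) at_top"
      using assms tendsto_mult_right_zero[OF piecewise_powr_tendsto_0_at_top] by simp
  qed
qed

lemma mellin_primitive_has_vector_derivative:
  assumes "0 < r" "(g has_real_derivative g' r / r) (at r)"
  shows "((\<lambda>r. of_real (g r) * of_real r powr (- s)) has_vector_derivative
      mellin_integrand g' s r - s * mellin_integrand g s r) (at r)"
proof -
  have "((\<lambda>r. of_real (g r) * of_real r powr (- s)) has_vector_derivative
      of_real (g r) * (- s * of_real r powr (- s - 1)) + of_real (g' r / r) * of_real r powr (- s)) (at r)"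
    using assms
    by (intro has_vector_derivative_mult has_vector_derivative_of_real
        has_vector_derivative_real_field[OF has_field_derivative_powr]) auto
  moreover have "of_real (g r) * (- s * of_real r powr (- s - 1)) + of_real (g' r / r) * of_real r powr (- s)
      = mellin_integrand g' s r - s * mellin_integrand g s r"
  proof -
    have "of_real r powr (- s - 1) = of_real r powr (- s) / of_real r"
      using assms by (simp add: powr_diff)
    moreover have "x * (- s * (P / z)) + y / z * P = y * P / z - s * (x * P / z)" for x y z P :: complex
      by (simp add: algebra_simps)
    ultimately show ?thesis by (simp add: mellin_integrand_def)
  qed
  ultimately show ?thesis by simp
qed

text \<open>\<open>g'\<close> is the Euler derivative \<open>r * (d/dr) g\<close>; integration by parts turns it into
  multiplication by \<open>s\<close>.\<close>
lemma mellin_euler: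
  assumes g: "mellin_dominated g a b" and g': "mellin_dominated g' a b"
    and deriv: "\<And>r. 0 < r \<Longrightarrow> (g has_real_derivative g' r / r) (at r)"
    and s: "b < Re s" "Re s < a"
  shows "mellin g' s = s * mellin g s"
proof -
  define F where "F = (\<lambda>r. of_real (g r) * of_real r powr (- s))"
  define f where "f r = mellin_integrand g' s r - s * mellin_integrand g s r" for r
  have "continuous_on {0<..} f"
    using g g' unfolding f_def mellin_dominated_def
    by (intro continuous_intros continuous_on_mellin_integrand) auto
  then have f_cont: "isCont f r" if "0 < r" for r
    using that by (simp add: continuous_on_eq_continuous_at)
  have integrable: "set_integrable lborel {0<..} (mellin_integrand g s)"
    "set_integrable lborel {0<..} (mellin_integrand g' s)"
    using g g' s by (auto intro: mellin_integrable)
  have "(LBINT r=0..\<infinity>. f r) = 0 - 0"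
  proof (rule interval_integral_FTC_integrable)
    show "(F has_vector_derivative f r) (at r)" if "0 < ereal r" for r
      using mellin_primitive_has_vector_derivative[where g = g and g' = g' and r = r] deriv that
      by (simp add: F_def f_def)
    show "set_integrable lborel (einterval 0 \<infinity>) f"
      using integrable unfolding f_def
      by (simp add: zero_ereal_def set_integral_diff(1) set_integrable_mult_right)
    show "((F \<circ> real_of_ereal) \<longlongrightarrow> 0) (at_right 0)"
      using mellin_boundary_tendsto_0(1)[OF g s] ereal_tendsto_simps1(2)[of F 0 0]
      by (simp add: zero_ereal_def F_def)
    show "((F \<circ> real_of_ereal) \<longlongrightarrow> 0) (at_left \<infinity>)"
      using mellin_boundary_tendsto_0(2)[OF g s] ereal_tendsto_simps1(3)[of F 0] by (simp add: F_def)
  qed (use f_cont in \<open>auto simp: zero_ereal_def\<close>)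
  moreover have "(LBINT r=0..\<infinity>. f r) = mellin g' s - s * mellin g s"
    using integrable
    by (simp add: interval_lebesgue_integral_def zero_ereal_def f_def mellin_def set_integral_diff(2))
  ultimately show ?thesis by simp
qed

lemma mellin_integrand_has_field_derivative:
  assumes "0 < r"
  shows "((\<lambda>w. mellin_integrand g w r) has_field_derivative - of_real (ln r) * mellin_integrand g s r) (at s)"
proof -
  have "((\<lambda>w. of_real (g r) * exp (- w * of_real (ln r)) / of_real r) has_field_derivative
      - of_real (ln r) * (of_real (g r) * exp (- s * of_real (ln r)) / of_real r)) (at s)"
    using assms by (auto intro!: derivative_eq_intros simp: field_simps)
  then show ?thesis using assms by (simp add: mellin_integrand_def of_real_powr_eq_exp)
qed

lemma norm_ln_mellin_integrand_le:
  assumes "\<And>r. 0 < r \<Longrightarrow> \<bar>g r\<bar> \<le> C * piecewise_powr a b r" "0 < r" "0 < \<delta>" "\<bar>Re w - \<mu>\<bar> \<le> \<delta>"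
  shows "norm (of_real (ln r) * mellin_integrand g w r) \<le>
    C / \<delta> * piecewise_powr (a - \<mu> - 2 * \<delta> - 1) (b - \<mu> + 2 * \<delta> - 1) r"
proof -
  have "norm (of_real (ln r) * mellin_integrand g w r) = \<bar>ln r\<bar> * norm (mellin_integrand g w r)"
    by (simp add: norm_mult)
  also have "\<dots> \<le> piecewise_powr (- \<delta>) \<delta> r / \<delta> *
      (C * piecewise_powr (a - (\<mu> + \<delta>) - 1) (b - (\<mu> - \<delta>) - 1) r)"
    using assms by (intro mult_mono abs_ln_le_piecewise_powr norm_mellin_integrand_le) auto
  also have "\<dots> = C / \<delta> * piecewise_powr (a - \<mu> - 2 * \<delta> - 1) (b - \<mu> + 2 * \<delta> - 1) r"
    by (simp add: piecewise_powr_mult algebra_simps)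
  finally show ?thesis .
qed

lemma mellin_holomorphic:
  assumes g: "mellin_dominated g a b"
  shows "mellin g holomorphic_on {s. b < Re s \<and> Re s < a}"
proof -
  obtain C where C: "\<And>r. 0 < r \<Longrightarrow> \<bar>g r\<bar> \<le> C * piecewise_powr a b r"
    using g by (auto simp: mellin_dominated_def)
  have "mellin g field_differentiable at z" if z: "b < Re z" "Re z < a" for z
  proof -
    define \<delta> where "\<delta> = min (a - Re z) (Re z - b) / 4"
    have \<delta>: "0 < \<delta>" "Re z + 2 * \<delta> < a" "b < Re z - 2 * \<delta>"
      using z by (auto simp: \<delta>_def min_def field_simps)
    have Re_ball: "\<bar>Re w - Re z\<bar> \<le> \<delta>" if "w \<in> ball z \<delta>" for w
      using that abs_Re_le_cmod[of "w - z"] by (simp add: dist_norm norm_minus_commute)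
    define W where "W r = C / \<delta> * piecewise_powr (a - Re z - 2 * \<delta> - 1) (b - Re z + 2 * \<delta> - 1) r" for r
    have "(mellin g has_field_derivative
        (LINT r:{0<..}|lborel. - of_real (ln r) * mellin_integrand g z r)) (at z)"
      unfolding mellin_def
    proof (rule has_field_derivative_set_integral[where W = W, OF \<open>0 < \<delta>\<close>])
      show "set_integrable lborel {0<..} (mellin_integrand g w)" if "w \<in> ball z \<delta>" for w
        using g \<delta> Re_ball[OF that] by (intro mellin_integrable) auto
      show "set_borel_measurable lborel {0<..} (\<lambda>r. - of_real (ln r) * mellin_integrand g z r)"
        using g unfolding mellin_dominated_def
        by (intro set_borel_measurable_continuous_on continuous_intros continuous_on_mellin_integrand) auto
      show "norm (- of_real (ln r) * mellin_integrand g w r) \<le> W r"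
        if "r \<in> {0<..}" "w \<in> ball z \<delta>" for r w
        using norm_ln_mellin_integrand_le[OF C _ \<open>0 < \<delta>\<close> Re_ball] that by (simp add: W_def)
      show "set_integrable lborel {0<..} W"
        unfolding W_def using \<delta> by (intro set_integrable_mult_right set_integrable_piecewise_powr) auto
    qed (use mellin_integrand_has_field_derivative in auto)
    then show ?thesis by (auto simp: field_differentiable_def)
  qed
  then show ?thesis
    by (auto simp: holomorphic_on_def intro: field_differentiable_at_within)
qed

section \<open>Rapid decay along vertical lines\<close>

definition rapidly_decreasing :: "(real \<Rightarrow> 'a::real_normed_vector) \<Rightarrow> bool" where
  "rapidly_decreasing h \<longleftrightarrow> (\<forall>N::nat. \<exists>C. \<forall>\<xi>. 1 \<le> \<bar>\<xi>\<bar> \<longrightarrow> norm (h \<xi>) * \<bar>\<xi>\<bar> ^ N \<le> C)"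

lemma rapidly_decreasing_le:
  assumes "rapidly_decreasing g" "\<And>\<xi>. 1 \<le> \<bar>\<xi>\<bar> \<Longrightarrow> norm (f \<xi>) \<le> M * norm (g \<xi>)"
  shows "rapidly_decreasing f"
  unfolding rapidly_decreasing_def
proof
  fix N
  obtain C where C: "\<And>\<xi>. 1 \<le> \<bar>\<xi>\<bar> \<Longrightarrow> norm (g \<xi>) * \<bar>\<xi>\<bar> ^ N \<le> C"
    using assms(1) by (auto simp: rapidly_decreasing_def)
  have "norm (f \<xi>) * \<bar>\<xi>\<bar> ^ N \<le> \<bar>M\<bar> * C" if "1 \<le> \<bar>\<xi>\<bar>" for \<xi>
  proof -
    have "norm (f \<xi>) \<le> \<bar>M\<bar> * norm (g \<xi>)"
      using assms(2)[OF that] abs_ge_self[of M] by (meson mult_right_mono norm_ge_zero order_trans)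
    then have "norm (f \<xi>) * \<bar>\<xi>\<bar> ^ N \<le> \<bar>M\<bar> * norm (g \<xi>) * \<bar>\<xi>\<bar> ^ N"
      by (simp add: mult_right_mono)
    also have "\<dots> \<le> \<bar>M\<bar> * C" using C[OF that] by (simp add: mult.assoc mult_left_mono)
    finally show ?thesis .
  qed
  then show "\<exists>C. \<forall>\<xi>. 1 \<le> \<bar>\<xi>\<bar> \<longrightarrow> norm (f \<xi>) * \<bar>\<xi>\<bar> ^ N \<le> C" by blast
qed

lemma rapidly_decreasing_add:
  assumes "rapidly_decreasing f" "rapidly_decreasing g"
  shows "rapidly_decreasing (\<lambda>\<xi>. f \<xi> + g \<xi>)"
  unfolding rapidly_decreasing_def
proof
  fix N
  obtain C1 C2 where C: "\<And>\<xi>. 1 \<le> \<bar>\<xi>\<bar> \<Longrightarrow> norm (f \<xi>) * \<bar>\<xi>\<bar> ^ N \<le> C1"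
      "\<And>\<xi>. 1 \<le> \<bar>\<xi>\<bar> \<Longrightarrow> norm (g \<xi>) * \<bar>\<xi>\<bar> ^ N \<le> C2"
    using assms by (metis rapidly_decreasing_def)
  have "norm (f \<xi> + g \<xi>) * \<bar>\<xi>\<bar> ^ N \<le> C1 + C2" if "1 \<le> \<bar>\<xi>\<bar>" for \<xi>
  proof -
    have "norm (f \<xi> + g \<xi>) * \<bar>\<xi>\<bar> ^ N \<le> (norm (f \<xi>) + norm (g \<xi>)) * \<bar>\<xi>\<bar> ^ N"
      by (simp add: mult_right_mono norm_triangle_ineq)
    also have "\<dots> \<le> C1 + C2" using C[OF that] by (simp add: distrib_right)
    finally show ?thesis .
  qed
  then show "\<exists>C. \<forall>\<xi>. 1 \<le> \<bar>\<xi>\<bar> \<longrightarrow> norm (f \<xi> + g \<xi>) * \<bar>\<xi>\<bar> ^ N \<le> C" by blast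
qed

lemma rapidly_decreasing_norm_iff [simp]:
  "rapidly_decreasing (\<lambda>\<xi>. norm (f \<xi>)) \<longleftrightarrow> rapidly_decreasing f"
  by (simp add: rapidly_decreasing_def)

lemma rapidly_decreasing_reflect:
  "rapidly_decreasing h \<Longrightarrow> rapidly_decreasing (\<lambda>\<xi>. h (- \<xi>))"
  unfolding rapidly_decreasing_def by (metis abs_minus_cancel)

lemma rapidly_decreasing_tendsto_0:
  fixes h :: "real \<Rightarrow> 'a::real_normed_vector"
  assumes "rapidly_decreasing h" "0 \<le> p"
  shows "((\<lambda>\<xi>. (norm (h \<xi>))\<^sup>2 * \<bar>\<xi>\<bar> powr (2 * p)) \<longlongrightarrow> 0) at_top"
proof -
  define N where "N = nat \<lceil>p\<rceil> + 1"
  have "p < real N" unfolding N_def by linarith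
  obtain C where C: "\<And>\<xi>. 1 \<le> \<bar>\<xi>\<bar> \<Longrightarrow> norm (h \<xi>) * \<bar>\<xi>\<bar> ^ N \<le> C"
    using assms(1) by (auto simp: rapidly_decreasing_def)
  have bound: "(norm (h \<xi>))\<^sup>2 * \<bar>\<xi>\<bar> powr (2 * p) \<le> C\<^sup>2 * \<xi> powr (2 * p - 2 * real N)" if "1 \<le> \<xi>" for \<xi>
  proof -
    have "\<xi> powr (2 * real N) = (\<xi> ^ N)\<^sup>2"
      using that powr_realpow[of \<xi> "N * 2"] by (simp add: power_mult mult.commute)
    then have "(norm (h \<xi>))\<^sup>2 * \<bar>\<xi>\<bar> powr (2 * p) =
        (norm (h \<xi>) * \<xi> ^ N)\<^sup>2 * \<xi> powr (2 * p - 2 * real N)"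
      using that by (simp add: powr_diff power_mult_distrib)
    also have "\<dots> \<le> C\<^sup>2 * \<xi> powr (2 * p - 2 * real N)"
      using C[of \<xi>] that by (intro mult_right_mono power_mono) auto
    finally show ?thesis .
  qed
  have "((\<lambda>\<xi>. \<xi> powr (2 * p - 2 * real N)) \<longlongrightarrow> 0) at_top"
    using \<open>p < real N\<close> by (intro tendsto_neg_powr filterlim_ident) auto
  then have upper: "((\<lambda>\<xi>. C\<^sup>2 * \<xi> powr (2 * p - 2 * real N)) \<longlongrightarrow> 0) at_top"
    by (rule tendsto_mult_right_zero)
  show ?thesis
  proof (rule tendsto_sandwich[OF _ _ tendsto_const upper])
    show "\<forall>\<^sub>F \<xi> in at_top. (norm (h \<xi>))\<^sup>2 * \<bar>\<xi>\<bar> powr (2 * p) \<le> C\<^sup>2 * \<xi> powr (2 * p - 2 * real N)"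
      unfolding eventually_at_top_linorder using bound by blast
  qed simp
qed

lemma rapidly_decreasing_linear_factor:
  fixes f G :: "complex \<Rightarrow> complex" and w :: real
  assumes "rapidly_decreasing (\<lambda>\<xi>. G (Complex \<mu> \<xi>))"
    and "\<And>\<xi>. 1 \<le> \<bar>\<xi>\<bar> \<Longrightarrow> (Complex \<mu> \<xi> + of_real w) * f (Complex \<mu> \<xi>) = G (Complex \<mu> \<xi>)"
  shows "rapidly_decreasing (\<lambda>\<xi>. f (Complex \<mu> \<xi>))"
proof (rule rapidly_decreasing_le[OF assms(1), where M = 1])
  fix \<xi> :: real assume "1 \<le> \<bar>\<xi>\<bar>"
  moreover have "\<bar>\<xi>\<bar> \<le> norm (Complex \<mu> \<xi> + of_real w)"
    using abs_Im_le_cmod[of "Complex \<mu> \<xi> + of_real w"] by simp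
  ultimately have "norm (f (Complex \<mu> \<xi>)) \<le> norm (Complex \<mu> \<xi> + of_real w) * norm (f (Complex \<mu> \<xi>))"
    by (intro mult_le_cancel_right1[THEN iffD2]) auto
  also have "\<dots> = norm (G (Complex \<mu> \<xi>))"
    using assms(2)[OF \<open>1 \<le> \<bar>\<xi>\<bar>\<close>] by (metis norm_mult)
  finally show "norm (f (Complex \<mu> \<xi>)) \<le> 1 * norm (G (Complex \<mu> \<xi>))" by simp
qed

lemma norm_Complex_minus_le:
  assumes "1 \<le> \<bar>\<xi>\<bar>"
  shows "norm (Complex \<mu> \<xi> - of_real \<beta>) \<le> (\<bar>\<mu>\<bar> + \<bar>\<beta>\<bar> + 1) * \<bar>\<xi>\<bar>"
proof -
  have "norm (Complex \<mu> \<xi> - of_real \<beta>) \<le> \<bar>\<mu>\<bar> + \<bar>\<beta>\<bar> + \<bar>\<xi>\<bar>"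
    using cmod_le[of "Complex \<mu> \<xi> - of_real \<beta>"] by simp
  moreover have "(\<bar>\<mu>\<bar> + \<bar>\<beta>\<bar>) * 1 \<le> (\<bar>\<mu>\<bar> + \<bar>\<beta>\<bar>) * \<bar>\<xi>\<bar>"
    using assms by (intro mult_left_mono) auto
  ultimately show ?thesis by (simp add: distrib_right)
qed

lemma norm_three_term_le:
  fixes X Y Z p q r :: complex
  assumes "p * X + q * Y = r * Z" "0 < t" "t \<le> norm p" "norm q \<le> M * t" "norm r \<le> M * t"
  shows "norm X \<le> M * (norm Y + norm Z)"
proof -
  have "t * norm X \<le> norm p * norm X" using assms(3) by (simp add: mult_right_mono)
  also have "\<dots> = norm (r * Z - q * Y)" using assms(1) by (metis add_diff_cancel_right' norm_mult)
  also have "\<dots> \<le> norm q * norm Y + norm r * norm Z"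
    using norm_triangle_ineq4[of "r * Z" "q * Y"] by (simp add: norm_mult)
  also have "\<dots> \<le> (M * t) * norm Y + (M * t) * norm Z"
    using assms(4,5) by (intro add_mono mult_right_mono) auto
  finally have "t * norm X \<le> t * (M * (norm Y + norm Z))" by (simp add: algebra_simps)
  then show ?thesis using \<open>0 < t\<close> by simp
qed

lemma rapidly_decreasing_recurrence_step:
  fixes f :: "complex \<Rightarrow> complex" and \<beta> c d :: real
  assumes rec: "\<And>s. Im s \<noteq> 0 \<Longrightarrow>
      (s + of_real \<beta>) * f (s + of_real d) + (s - of_real \<beta>) * f (s - of_real d) = of_real c * s * f s"
    and "rapidly_decreasing (\<lambda>\<xi>. f (Complex \<mu> \<xi>))"
    and "rapidly_decreasing (\<lambda>\<xi>. f (Complex (\<mu> - d) \<xi>))"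
  shows "rapidly_decreasing (\<lambda>\<xi>. f (Complex (\<mu> + d) \<xi>))"
proof (rule rapidly_decreasing_le)
  show "rapidly_decreasing (\<lambda>\<xi>. norm (f (Complex (\<mu> - d) \<xi>)) + norm (f (Complex \<mu> \<xi>)))"
    using assms(2,3) by (intro rapidly_decreasing_add) simp_all
  define K where "K = \<bar>\<mu>\<bar> + \<bar>\<beta>\<bar> + 1"
  fix \<xi> :: real assume \<xi>: "1 \<le> \<bar>\<xi>\<bar>"
  define s where "s = Complex \<mu> \<xi>"
  have "norm (f (s + d)) \<le> ((\<bar>c\<bar> + 1) * K) * (norm (f (s - d)) + norm (f s))"
  proof (rule norm_three_term_le[OF rec])
    show "Im s \<noteq> 0" "0 < \<bar>\<xi>\<bar>" using \<xi> by (auto simp: s_def)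
    show "\<bar>\<xi>\<bar> \<le> norm (s + \<beta>)" using abs_Im_le_cmod[of "s + \<beta>"] by (simp add: s_def)
    have "0 \<le> K * \<bar>\<xi>\<bar>" by (simp add: K_def)
    then have "K * \<bar>\<xi>\<bar> \<le> ((\<bar>c\<bar> + 1) * K) * \<bar>\<xi>\<bar>" and "\<bar>c\<bar> * (K * \<bar>\<xi>\<bar>) \<le> ((\<bar>c\<bar> + 1) * K) * \<bar>\<xi>\<bar>"
      using mult_nonneg_nonneg[of "\<bar>c\<bar>" "K * \<bar>\<xi>\<bar>"] by (simp_all add: algebra_simps)
    moreover have "norm s \<le> K * \<bar>\<xi>\<bar>"
      using norm_Complex_minus_le[OF \<xi>, of \<mu> 0] mult_right_mono[OF _ abs_ge_zero, of "\<bar>\<mu>\<bar> + 1" K \<xi>]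
      by (simp add: s_def K_def)
    moreover have "norm (s - \<beta>) \<le> K * \<bar>\<xi>\<bar>"
      using norm_Complex_minus_le[OF \<xi>] by (simp add: s_def K_def)
    moreover have "norm (of_real c * s) \<le> \<bar>c\<bar> * (K * \<bar>\<xi>\<bar>)"
      using \<open>norm s \<le> K * \<bar>\<xi>\<bar>\<close> by (simp add: norm_mult mult_left_mono)
    ultimately show "norm (s - \<beta>) \<le> ((\<bar>c\<bar> + 1) * K) * \<bar>\<xi>\<bar>"
      and "norm (of_real c * s) \<le> ((\<bar>c\<bar> + 1) * K) * \<bar>\<xi>\<bar>"
      by linarith+
  qed
  moreover have "s + d = Complex (\<mu> + d) \<xi>" "s - d = Complex (\<mu> - d) \<xi>"
    by (simp_all add: s_def complex_eq_iff)
  ultimately show "norm (f (Complex (\<mu> + d) \<xi>)) \<le> ((\<bar>c\<bar> + 1) * K) *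
      norm (norm (f (Complex (\<mu> - d) \<xi>)) + norm (f (Complex \<mu> \<xi>)))"
    by (simp add: s_def)
qed

lemma rapidly_decreasing_recurrence:
  fixes f :: "complex \<Rightarrow> complex" and \<beta> c :: real
  assumes rec: "\<And>s. Im s \<noteq> 0 \<Longrightarrow>
      (s + of_real \<beta>) * f (s + 1) + (s - of_real \<beta>) * f (s - 1) = of_real c * s * f s"
    and base: "\<And>\<mu>. a < \<mu> \<Longrightarrow> \<mu> < b \<Longrightarrow> rapidly_decreasing (\<lambda>\<xi>. f (Complex \<mu> \<xi>))"
    and "a + 2 < b"
  shows "rapidly_decreasing (\<lambda>\<xi>. f (Complex \<mu> \<xi>))"
proof -
  have rec_right: "(s + of_real \<beta>) * f (s + of_real 1) + (s - of_real \<beta>) * f (s - of_real 1)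
      = of_real c * s * f s" if "Im s \<noteq> 0" for s
    using rec[OF that] by simp
  have rec_left: "(s + of_real (- \<beta>)) * f (s + of_real (- 1)) + (s - of_real (- \<beta>)) * f (s - of_real (- 1))
      = of_real c * s * f s" if "Im s \<noteq> 0" for s
    using rec[OF that] by (simp add: add.commute)
  have "\<forall>\<mu>. a - n < \<mu> \<and> \<mu> < b + n \<longrightarrow> rapidly_decreasing (\<lambda>\<xi>. f (Complex \<mu> \<xi>))" for n :: nat
  proof (induction n)
    case (Suc n)
    show ?case
    proof (intro allI impI)
      fix \<mu> assume \<mu>: "a - Suc n < \<mu> \<and> \<mu> < b + Suc n"
      consider "a - n < \<mu> \<and> \<mu> < b + n" | "b + n \<le> \<mu>" | "\<mu> \<le> a - n" by linarith
      then show "rapidly_decreasing (\<lambda>\<xi>. f (Complex \<mu> \<xi>))"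
      proof cases
        case 2
        then show ?thesis
          using rapidly_decreasing_recurrence_step[OF rec_right, of "\<mu> - 1"] Suc.IH \<mu> \<open>a + 2 < b\<close> by simp
      next
        case 3
        then show ?thesis
          using rapidly_decreasing_recurrence_step[OF rec_left, of "\<mu> + 1"] Suc.IH \<mu> \<open>a + 2 < b\<close> by simp
      qed (use Suc.IH in blast)
    qed
  qed (use base in simp)
  moreover obtain n :: nat where "\<bar>\<mu>\<bar> + \<bar>a\<bar> + \<bar>b\<bar> < n" using reals_Archimedean2 by blast
  then have "a - n < \<mu> \<and> \<mu> < b + n" by (auto simp: abs_less_iff abs_if split: if_splits)
  ultimately show ?thesis by blast
qed

text \<open>The strip minus the real axis is not connected: the identity theorem is applied on the
  half-strip containing \<open>z\<close>.\<close>
lemma holomorphic_eq_off_real_axis: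
  assumes "f holomorphic_on {s. a < Re s \<and> Re s < b \<and> Im s \<noteq> 0}"
    and "g holomorphic_on {s. a < Re s \<and> Re s < b \<and> Im s \<noteq> 0}"
    and "a \<le> a'" "a' < b'" "b' \<le> b"
    and eq: "\<And>s. a' < Re s \<Longrightarrow> Re s < b' \<Longrightarrow> Im s \<noteq> 0 \<Longrightarrow> f s = g s"
    and z: "a < Re z" "Re z < b" "Im z \<noteq> 0"
  shows "f z = g z"
proof -
  define H where "H x y = {s. x < inner 1 s} \<inter> {s. inner 1 s < y} \<inter> {s. 0 < inner (Complex 0 (Im z)) s}"
    for x y :: real
  have mem_H: "s \<in> H x y \<longleftrightarrow> x < Re s \<and> Re s < y \<and> 0 < Im z * Im s" for s x y
    by (simp add: H_def inner_complex_def)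
  have H_open: "open (H x y)" for x y
    unfolding H_def by (intro open_Int open_halfspace_gt open_halfspace_lt)
  have H_sub: "H a b \<subseteq> {s. a < Re s \<and> Re s < b \<and> Im s \<noteq> 0}"
    by (auto simp: mem_H)
  show ?thesis
  proof (rule analytic_continuation_open[where s = "H a' b'" and s' = "H a b" and f = f and g = g])
    show "open (H a' b')" "open (H a b)" by (rule H_open)+
    show "connected (H a b)"
      unfolding H_def by (intro convex_connected convex_Int convex_halfspace_gt convex_halfspace_lt)
    have "Complex ((a' + b') / 2) (Im z) \<in> H a' b'"
      using z \<open>a' < b'\<close> by (auto simp: mem_H zero_less_mult_iff)
    then show "H a' b' \<noteq> {}" by blast
    show "H a' b' \<subseteq> H a b" using \<open>a \<le> a'\<close> \<open>b' \<le> b\<close> by (auto simp: mem_H)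
    show "f holomorphic_on H a b" "g holomorphic_on H a b"
      using assms(1,2) H_sub by (auto intro: holomorphic_on_subset)
    show "f s = g s" if "s \<in> H a' b'" for s
      using that by (intro eq) (auto simp: mem_H)
    show "z \<in> H a b" using z by (auto simp: mem_H zero_less_mult_iff)
  qed
qed

section \<open>The kernels \<open>t powr a * (t\<^sup>2 - c t + 1) powr b * R t\<close>\<close>

lemma abs_poly_le_piecewise_powr:
  fixes P :: "real poly"
  assumes "0 < t" "degree P \<le> d"
  shows "\<bar>poly P t\<bar> \<le> (\<Sum>i\<le>degree P. \<bar>coeff P i\<bar>) * piecewise_powr 0 d t"
proof -
  have "\<bar>poly P t\<bar> \<le> (\<Sum>i\<le>degree P. \<bar>coeff P i * t ^ i\<bar>)"
    unfolding poly_altdef by (rule sum_abs)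
  also have "\<dots> \<le> (\<Sum>i\<le>degree P. \<bar>coeff P i\<bar> * piecewise_powr 0 d t)"
  proof (intro sum_mono)
    fix i assume "i \<in> {..degree P}"
    then have "t ^ i \<le> piecewise_powr 0 d t"
      using assms by (auto simp: piecewise_powr_def powr_realpow power_le_one intro: power_increasing)
    then show "\<bar>coeff P i * t ^ i\<bar> \<le> \<bar>coeff P i\<bar> * piecewise_powr 0 d t"
      using assms by (simp add: abs_mult mult_left_mono)
  qed
  finally show ?thesis by (simp add: sum_distrib_right)
qed

lemma degree_linear_poly_le: "degree [:x, y:] \<le> 1"
  by (simp add: degree_pCons_eq_if)

locale quadratic_kernel =
  fixes c :: real
  assumes c_ge: "-2 \<le> c" and c_less: "c < 2"
begin

definition qpoly :: "real poly" where
  "qpoly = [:1, -c, 1:]"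

definition kernel :: "real \<Rightarrow> real \<Rightarrow> real poly \<Rightarrow> real \<Rightarrow> real" where
  "kernel a b R t = t powr a * poly qpoly t powr b * poly R t"

definition euler_poly :: "real \<Rightarrow> real \<Rightarrow> real poly \<Rightarrow> real poly" where
  "euler_poly a b R =
     smult a (R * qpoly) + smult b ([:0, 1:] * pderiv qpoly * R) + [:0, 1:] * qpoly * pderiv R"

lemma poly_qpoly: "poly qpoly t = t\<^sup>2 - c * t + 1"
  by (simp add: qpoly_def algebra_simps power2_eq_square)

lemma qpoly_lower_bound:
  assumes "0 \<le> t"
  shows "(2 - c) / 4 * (1 + t\<^sup>2) \<le> poly qpoly t"
proof -
  have "poly qpoly t - (2 - c) / 4 * (1 + t\<^sup>2) = (2 + c) / 4 * (t - 1)\<^sup>2 + (2 - c) / 2 * t"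
    by (simp add: poly_qpoly power2_eq_square field_simps)
  also have "\<dots> \<ge> 0"
    using assms c_ge c_less by (intro add_nonneg_nonneg mult_nonneg_nonneg) auto
  finally show ?thesis by simp
qed

lemma qpoly_pos:
  assumes "0 \<le> t"
  shows "0 < poly qpoly t"
proof -
  have "0 < (2 - c) / 4 * (1 + t\<^sup>2)"
    using c_less by (intro mult_pos_pos) (auto simp: add_pos_nonneg)
  then show ?thesis using qpoly_lower_bound[OF assms] by linarith
qed

lemma qpoly_powr_le:
  assumes "b \<le> 0" "0 < t"
  shows "poly qpoly t powr b \<le> ((2 - c) / 4) powr b * piecewise_powr 0 (2 * b) t"
proof -
  define \<kappa> where "\<kappa> = (2 - c) / 4"
  have "0 < \<kappa>" using c_less by (simp add: \<kappa>_def)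
  have "piecewise_powr 0 2 t \<le> 1 + t\<^sup>2"
    using assms by (auto simp: piecewise_powr_def powr_realpow)
  then have "\<kappa> * piecewise_powr 0 2 t \<le> poly qpoly t"
    using qpoly_lower_bound[of t] assms \<open>0 < \<kappa>\<close> unfolding \<kappa>_def
    by (meson less_imp_le mult_left_mono order_trans)
  moreover have "0 < \<kappa> * piecewise_powr 0 2 t"
    using assms \<open>0 < \<kappa>\<close> by (simp add: piecewise_powr_def)
  ultimately have "poly qpoly t powr b \<le> (\<kappa> * piecewise_powr 0 2 t) powr b"
    using assms by (intro powr_mono2') auto
  also have "\<dots> = \<kappa> powr b * piecewise_powr 0 (2 * b) t"
    using \<open>0 < \<kappa>\<close> by (simp add: powr_mult piecewise_powr_def powr_powr mult.commute del: powr_numeral)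
  finally show ?thesis by (simp add: \<kappa>_def)
qed

lemma kernel_dominated:
  assumes "b \<le> 0" "degree R \<le> d"
  shows "mellin_dominated (kernel a b R) a (a + 2 * b + real d)"
  unfolding mellin_dominated_def
proof
  have "poly qpoly t \<noteq> 0" if "t \<in> {0<..}" for t
    using qpoly_pos[of t] that by simp
  then show "continuous_on {0<..} (kernel a b R)"
    unfolding kernel_def[abs_def] by (intro continuous_intros) auto
  define C where "C = ((2 - c) / 4) powr b * (\<Sum>i\<le>degree R. \<bar>coeff R i\<bar>)"
  have "\<bar>kernel a b R t\<bar> \<le> C * piecewise_powr a (a + 2 * b + real d) t" if "0 < t" for t
  proof -
    have "\<bar>kernel a b R t\<bar> = t powr a * poly qpoly t powr b * \<bar>poly R t\<bar>"
      by (simp add: kernel_def abs_mult)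
    also have "\<dots> \<le> piecewise_powr a a t * (((2 - c) / 4) powr b * piecewise_powr 0 (2 * b) t) *
        ((\<Sum>i\<le>degree R. \<bar>coeff R i\<bar>) * piecewise_powr 0 d t)"
      using that assms
      by (intro mult_mono qpoly_powr_le abs_poly_le_piecewise_powr) (auto simp: piecewise_powr_def)
    also have "\<dots> = C * (piecewise_powr a a t * piecewise_powr 0 (2 * b) t * piecewise_powr 0 d t)"
      by (simp add: C_def mult_ac)
    also have "\<dots> = C * piecewise_powr a (a + 2 * b + real d) t"
      by (simp add: piecewise_powr_mult)
    finally show ?thesis .
  qed
  then show "\<exists>C. \<forall>t>0. \<bar>kernel a b R t\<bar> \<le> C * piecewise_powr a (a + 2 * b + real d) t" by blast
qed

lemma kernel_has_real_derivative:
  assumes "0 < t"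
  shows "(kernel a b R has_real_derivative kernel a (b - 1) (euler_poly a b R) t / t) (at t)"
proof -
  define P U Q Q' where "P = t powr a" and "U = poly qpoly t powr b"
    and "Q = poly qpoly t" and "Q' = poly (pderiv qpoly) t"
  have "0 < Q" using qpoly_pos assms by (simp add: Q_def)
  have "((\<lambda>x. poly qpoly x powr b) has_real_derivative b * Q powr (b - 1) * Q') (at t)"
    using DERIV_fun_powr[OF poly_DERIV, of qpoly t b] \<open>0 < Q\<close> by (simp add: Q_def Q'_def)
  then have "(kernel a b R has_real_derivative
      (a * t powr (a - 1) * U + b * Q powr (b - 1) * Q' * P) * poly R t + poly (pderiv R) t * (P * U)) (at t)"
    unfolding kernel_def[abs_def] P_def U_def Q_def Q'_def
    using assms by (intro DERIV_mult has_real_derivative_powr poly_DERIV)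
  moreover have "(a * t powr (a - 1) * U + b * Q powr (b - 1) * Q' * P) * poly R t + poly (pderiv R) t * (P * U)
      = kernel a (b - 1) (euler_poly a b R) t / t"
  proof -
    have kernel_eq: "kernel a (b - 1) (euler_poly a b R) t =
        P * Q powr (b - 1) * (a * (poly R t * Q) + b * (t * Q' * poly R t) + t * Q * poly (pderiv R) t)"
      by (simp add: kernel_def euler_poly_def P_def Q_def Q'_def)
    have powr_pred: "t powr (a - 1) = P / t" "Q powr (b - 1) = U / Q"
      using assms \<open>0 < Q\<close> by (simp_all add: P_def U_def Q_def powr_diff)
    show ?thesis
      unfolding kernel_eq powr_pred using assms \<open>0 < Q\<close> by (simp add: field_simps)
  qed
  ultimately show ?thesis by simp
qed

lemma degree_euler_poly: "degree (euler_poly a b R) \<le> degree R + 2"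
proof -
  have "degree qpoly = 2" by (simp add: qpoly_def)
  then have "degree (smult a (R * qpoly)) \<le> degree R + 2"
    "degree (smult b ([:0, 1:] * pderiv qpoly * R)) \<le> degree R + 2"
    using degree_mult_le[of R qpoly] degree_mult_le[of "[:0, 1:] * pderiv qpoly" R]
      degree_mult_le[of "[:0, 1:]" "pderiv qpoly"] degree_pderiv[of qpoly]
    by (auto simp: degree_linear_poly_le)
  moreover have "degree ([:0, 1:] * qpoly * pderiv R) \<le> degree R + 2"
  proof (cases "pderiv R = 0")
    case False
    then have "1 \<le> degree R" using pderiv_eq_0_iff[of R] by linarith
    then show ?thesis
      using \<open>degree qpoly = 2\<close> degree_mult_le[of "[:0, 1:] * qpoly" "pderiv R"]
        degree_mult_le[of "[:0, 1:]" qpoly] degree_pderiv[of R]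
      by (auto simp: degree_linear_poly_le)
  qed simp
  ultimately show ?thesis unfolding euler_poly_def by (intro degree_add_le)
qed

lemma mellin_kernel_euler:
  assumes "b \<le> 0" "degree R \<le> d" "a + 2 * b + real d < Re s" "Re s < a"
  shows "mellin (kernel a (b - 1) (euler_poly a b R)) s = s * mellin (kernel a b R) s"
proof (rule mellin_euler)
  show "mellin_dominated (kernel a b R) a (a + 2 * b + real d)"
    using assms by (intro kernel_dominated)
  have "mellin_dominated (kernel a (b - 1) (euler_poly a b R)) a (a + 2 * (b - 1) + real (d + 2))"
    using assms degree_euler_poly[of a b R] by (intro kernel_dominated) auto
  then show "mellin_dominated (kernel a (b - 1) (euler_poly a b R)) a (a + 2 * b + real d)"
    by (simp add: algebra_simps)
qed (use assms kernel_has_real_derivative in auto)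

lemma rapidly_decreasing_mellin_kernel:
  assumes "b \<le> 0" "degree R \<le> d" "a + 2 * b + real d < \<mu>" "\<mu> < a"
  shows "rapidly_decreasing (\<lambda>\<xi>. mellin (kernel a b R) (Complex \<mu> \<xi>))"
  unfolding rapidly_decreasing_def
proof
  fix N
  show "\<exists>C. \<forall>\<xi>. 1 \<le> \<bar>\<xi>\<bar> \<longrightarrow> norm (mellin (kernel a b R) (Complex \<mu> \<xi>)) * \<bar>\<xi>\<bar> ^ N \<le> C"
    using assms
  proof (induction N arbitrary: b R d)
    case 0
    obtain B where "\<And>s. Re s = \<mu> \<Longrightarrow> norm (mellin (kernel a b R) s) \<le> B"
      using mellin_bounded_on_line[OF kernel_dominated[OF "0.prems"(1,2)]] "0.prems"(3,4) by blast
    then show ?case by (metis complex.sel(1) mult.right_neutral power_0)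
  next
    case (Suc N)
    let ?R' = "euler_poly a b R"
    have "degree ?R' \<le> d + 2" using degree_euler_poly[of a b R] Suc.prems(2) by linarith
    then obtain C where C: "\<And>\<xi>. 1 \<le> \<bar>\<xi>\<bar> \<Longrightarrow>
        norm (mellin (kernel a (b - 1) ?R') (Complex \<mu> \<xi>)) * \<bar>\<xi>\<bar> ^ N \<le> C"
      using Suc.IH[of "b - 1" ?R' "d + 2"] Suc.prems by auto
    have "norm (mellin (kernel a b R) (Complex \<mu> \<xi>)) * \<bar>\<xi>\<bar> ^ Suc N \<le> C" if "1 \<le> \<bar>\<xi>\<bar>" for \<xi>
    proof -
      have "\<bar>\<xi>\<bar> \<le> norm (Complex \<mu> \<xi>)" using abs_Im_le_cmod[of "Complex \<mu> \<xi>"] by simp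
      then have "\<bar>\<xi>\<bar> * (norm (mellin (kernel a b R) (Complex \<mu> \<xi>)) * \<bar>\<xi>\<bar> ^ N) \<le>
          norm (Complex \<mu> \<xi>) * (norm (mellin (kernel a b R) (Complex \<mu> \<xi>)) * \<bar>\<xi>\<bar> ^ N)"
        by (intro mult_right_mono) auto
      also have "\<dots> = norm (mellin (kernel a (b - 1) ?R') (Complex \<mu> \<xi>)) * \<bar>\<xi>\<bar> ^ N"
        using mellin_kernel_euler[where s = "Complex \<mu> \<xi>"] Suc.prems by (simp add: norm_mult)
      also have "\<dots> \<le> C" using C[OF that] .
      finally show ?thesis by (simp add: mult_ac)
    qed
    then show ?case by blast
  qed
qed

text \<open>With \<open>\<Theta> = t d/dt\<close>: \<open>K_euler = \<Theta> K\<close>, \<open>K_plus = (\<Theta> + 1/4) K\<close> and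
  \<open>K_minus = (\<Theta> - 1/4) K\<close>, the last two written so that \<open>kernel_dominated\<close> gives them the
  strips \<open>(-5/4, 1/4)\<close> and \<open>(-1/4, 5/4)\<close>.\<close>
abbreviation K :: "real \<Rightarrow> real" where
  "K \<equiv> kernel (1/4) (-1/4) 1"

abbreviation K_euler :: "real \<Rightarrow> real" where
  "K_euler \<equiv> kernel (1/4) (-5/4) [:1/4, 0, -1/4:]"

abbreviation K_plus :: "real \<Rightarrow> real" where
  "K_plus \<equiv> kernel (1/4) (-5/4) [:1/2, -c/4:]"

abbreviation K_minus :: "real \<Rightarrow> real" where
  "K_minus \<equiv> kernel (5/4) (-5/4) [:c/4, -1/2:]"

lemma K_identities:
  assumes "0 < t"
  shows "K_plus t = K_euler t + K t / 4" "K_minus t = K_euler t - K t / 4"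
    "K_minus t / t + t * K_plus t = c * K_euler t"
proof -
  define P U where "P = t powr (1/4)" and "U = poly qpoly t powr (-5/4)"
  have "poly qpoly t powr (-1/4) = poly qpoly t powr 1 * U"
    unfolding U_def powr_add[symmetric] by simp
  then have "K t = P * U * (t\<^sup>2 - c * t + 1)"
    using qpoly_pos[of t] assms by (simp add: kernel_def P_def poly_qpoly)
  moreover have "t powr (5/4) = t powr 1 * P"
    unfolding P_def powr_add[symmetric] by simp
  then have "K_minus t = t * P * U * (c/4 - t/2)"
    using assms by (simp add: kernel_def U_def algebra_simps)
  moreover have "K_euler t = P * U * (1 - t\<^sup>2) / 4" "K_plus t = P * U * (1/2 - c * t / 4)"
    by (simp_all add: kernel_def P_def U_def algebra_simps power2_eq_square)
  ultimately have explicit: "K t = P * U * (t\<^sup>2 - c * t + 1)" "K_euler t = P * U * (1 - t\<^sup>2) / 4"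
    "K_plus t = P * U * (1/2 - c * t / 4)" "K_minus t = t * P * U * (c/4 - t/2)"
    by simp_all
  show "K_plus t = K_euler t + K t / 4" "K_minus t = K_euler t - K t / 4"
    "K_minus t / t + t * K_plus t = c * K_euler t"
    unfolding explicit using assms by (simp_all add: field_simps power2_eq_square)
qed

lemma mellin_K_euler:
  assumes "-1/4 < Re s" "Re s < 1/4"
  shows "mellin K_euler s = s * mellin K s"
proof -
  have "euler_poly (1/4) (-1/4) 1 = [:1/4, 0, -1/4:]"
    by (simp add: euler_poly_def qpoly_def pderiv_pCons)
  then show ?thesis
    using mellin_kernel_euler[where a = "1/4" and b = "-1/4" and R = 1 and d = 0 and s = s] assms
    by simp
qed

lemma mellin_K_plus_minus:
  assumes s: "-1/4 < Re s" "Re s < 1/4"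
  shows "mellin K_plus s = (s + 1/4) * mellin K s"
    and "mellin K_minus s = (s - 1/4) * mellin K s"
proof -
  have int_K: "set_integrable lborel {0<..} (mellin_integrand K s)"
    using s by (intro mellin_integrable[OF kernel_dominated[of "-1/4" 1 0]]) auto
  have int_K_euler: "set_integrable lborel {0<..} (mellin_integrand K_euler s)"
    using s by (intro mellin_integrable[OF kernel_dominated[of "-5/4" "[:1/4, 0, -1/4:]" 2]]) auto
  have "mellin K_plus s = mellin (\<lambda>t. 1 * K_euler t + 1/4 * K t) s"
    by (rule mellin_cong) (simp only: K_identities(1); simp)
  also have "\<dots> = mellin K_euler s + 1/4 * mellin K s"
    using mellin_linear[OF int_K_euler int_K, of 1 "1/4"] by simp
  finally show "mellin K_plus s = (s + 1/4) * mellin K s"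
    using mellin_K_euler[OF s] by (simp add: algebra_simps)
  have "mellin K_minus s = mellin (\<lambda>t. 1 * K_euler t + (-1/4) * K t) s"
    by (rule mellin_cong) (simp only: K_identities(2); simp)
  also have "\<dots> = mellin K_euler s - 1/4 * mellin K s"
    using mellin_linear[OF int_K_euler int_K, of 1 "-1/4"] by simp
  finally show "mellin K_minus s = (s - 1/4) * mellin K s"
    using mellin_K_euler[OF s] by (simp add: algebra_simps)
qed

lemma mellin_K_recurrence:
  assumes s: "-1/4 < Re s" "Re s < 1/4"
  shows "mellin K_minus (s + 1) + mellin K_plus (s - 1) = of_real c * s * mellin K s"
proof -
  have int_minus: "set_integrable lborel {0<..} (mellin_integrand (\<lambda>t. t powr (-1) * K_minus t) s)"
    using s degree_linear_poly_le
    by (intro mellin_integrable[OF mellin_dominated_powr_mult[OF kernel_dominated[of "-5/4" _ 1]]]) auto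
  have int_plus: "set_integrable lborel {0<..} (mellin_integrand (\<lambda>t. t powr 1 * K_plus t) s)"
    using s degree_linear_poly_le
    by (intro mellin_integrable[OF mellin_dominated_powr_mult[OF kernel_dominated[of "-5/4" _ 1]]]) auto
  have "mellin K_minus (s + 1) + mellin K_plus (s - 1) =
      mellin (\<lambda>t. t powr (-1) * K_minus t) s + mellin (\<lambda>t. t powr 1 * K_plus t) s"
    using mellin_powr_mult[of "-1" K_minus s] mellin_powr_mult[of 1 K_plus s] by simp
  also have "\<dots> = mellin (\<lambda>t. 1 * (t powr (-1) * K_minus t) + 1 * (t powr 1 * K_plus t)) s"
    using mellin_linear[OF int_minus int_plus, of 1 1] by simp
  also have "\<dots> = mellin (\<lambda>t. c * K_euler t) s"
  proof (rule mellin_cong)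
    fix t :: real assume "0 < t"
    then show "1 * (t powr (-1) * K_minus t) + 1 * (t powr 1 * K_plus t) = c * K_euler t"
      using K_identities(3)[OF \<open>0 < t\<close>] by (simp add: powr_minus_divide)
  qed
  finally show ?thesis
    using mellin_K_euler[OF s] by (simp add: mellin_scale)
qed

context
  fixes F :: "complex \<Rightarrow> complex"
  assumes F_holomorphic: "F holomorphic_on {s. Im s \<noteq> 0}"
    and F_eq_mellin: "\<And>s. -1/4 < Re s \<Longrightarrow> Re s < 1/4 \<Longrightarrow> Im s \<noteq> 0 \<Longrightarrow> F s = mellin K s"
begin

lemma continuation_linear_factor:
  assumes G: "G holomorphic_on {s. lo < Re s \<and> Re s < hi}" "lo \<le> -1/4" "1/4 \<le> hi"
    and eq: "\<And>s. -1/4 < Re s \<Longrightarrow> Re s < 1/4 \<Longrightarrow> (s + of_real w) * mellin K s = G s"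
    and s: "lo < Re s" "Re s < hi" "Im s \<noteq> 0"
  shows "(s + of_real w) * F s = G s"
proof (rule holomorphic_eq_off_real_axis[where a = lo and b = hi and a' = "-1/4" and b' = "1/4"
      and f = "\<lambda>s. (s + of_real w) * F s" and g = G])
  show "(\<lambda>s. (s + of_real w) * F s) holomorphic_on {s. lo < Re s \<and> Re s < hi \<and> Im s \<noteq> 0}"
    by (intro holomorphic_intros holomorphic_on_subset[OF F_holomorphic]) auto
  show "G holomorphic_on {s. lo < Re s \<and> Re s < hi \<and> Im s \<noteq> 0}"
    using G(1) by (rule holomorphic_on_subset) auto
qed (use G(2,3) eq s F_eq_mellin in auto)

lemma continuation_K_plus:
  assumes "-5/4 < Re s" "Re s < 1/4" "Im s \<noteq> 0"
  shows "(s + 1/4) * F s = mellin K_plus s"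
proof -
  have "mellin K_plus holomorphic_on {s. 1/4 + 2 * (-5/4) + real 1 < Re s \<and> Re s < 1/4}"
    by (intro mellin_holomorphic kernel_dominated) (auto simp: degree_linear_poly_le)
  then show ?thesis
    using continuation_linear_factor[where w = "1/4" and lo = "-5/4" and hi = "1/4"] assms
      mellin_K_plus_minus(1)
    by simp
qed

lemma continuation_K_minus:
  assumes "-1/4 < Re s" "Re s < 5/4" "Im s \<noteq> 0"
  shows "(s - 1/4) * F s = mellin K_minus s"
proof -
  have "mellin K_minus holomorphic_on {s. 5/4 + 2 * (-5/4) + real 1 < Re s \<and> Re s < 5/4}"
    by (intro mellin_holomorphic kernel_dominated) (auto simp: degree_linear_poly_le)
  then show ?thesis
    using continuation_linear_factor[where w = "-1/4" and lo = "-1/4" and hi = "5/4"] assms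
      mellin_K_plus_minus(2)
    by simp
qed

lemma continuation_recurrence:
  assumes "Im s \<noteq> 0"
  shows "(s + of_real (3/4)) * F (s + 1) + (s - of_real (3/4)) * F (s - 1) = of_real c * s * F s"
proof (rule holomorphic_eq_off_real_axis
    [where a = "- \<bar>Re s\<bar> - 1" and b = "\<bar>Re s\<bar> + 1" and a' = "-1/4" and b' = "1/4"
      and f = "\<lambda>s. (s + of_real (3/4)) * F (s + 1) + (s - of_real (3/4)) * F (s - 1)"
      and g = "\<lambda>s. of_real c * s * F s"])
  have "(F \<circ> (\<lambda>s. s + of_real d)) holomorphic_on {s. Im s \<noteq> 0}" for d :: real
    by (rule holomorphic_on_compose_gen[OF _ F_holomorphic]) (auto intro: holomorphic_intros)
  from this[of 1] this[of "-1"]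
  have "(\<lambda>s. F (s + 1)) holomorphic_on {s. Im s \<noteq> 0}" "(\<lambda>s. F (s - 1)) holomorphic_on {s. Im s \<noteq> 0}"
    by (simp_all add: o_def)
  then show "(\<lambda>s. (s + of_real (3/4)) * F (s + 1) + (s - of_real (3/4)) * F (s - 1)) holomorphic_on
      {z. - \<bar>Re s\<bar> - 1 < Re z \<and> Re z < \<bar>Re s\<bar> + 1 \<and> Im z \<noteq> 0}"
    by (intro holomorphic_intros; auto intro: holomorphic_on_subset)
  show "(\<lambda>s. of_real c * s * F s) holomorphic_on
      {z. - \<bar>Re s\<bar> - 1 < Re z \<and> Re z < \<bar>Re s\<bar> + 1 \<and> Im z \<noteq> 0}"
    by (intro holomorphic_intros holomorphic_on_subset[OF F_holomorphic]) auto
  fix z assume z: "-1/4 < Re z" "Re z < 1/4" "Im z \<noteq> 0"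
  have "(z + of_real (3/4)) * F (z + 1) = mellin K_minus (z + 1)"
    using continuation_K_minus[of "z + 1"] z by (simp add: algebra_simps)
  moreover have "(z - of_real (3/4)) * F (z - 1) = mellin K_plus (z - 1)"
    using continuation_K_plus[of "z - 1"] z by (simp add: algebra_simps)
  ultimately show "(z + of_real (3/4)) * F (z + 1) + (z - of_real (3/4)) * F (z - 1) = of_real c * z * F z"
    using z mellin_K_recurrence[OF z(1,2)] by (simp add: F_eq_mellin)
qed (use assms in auto)

lemma rapidly_decreasing_continuation: "rapidly_decreasing (\<lambda>\<xi>. F (Complex \<mu> \<xi>))"
proof (rule rapidly_decreasing_recurrence[OF continuation_recurrence, where a = "-5/4" and b = "5/4"])
  fix \<mu> :: real assume \<mu>: "-5/4 < \<mu>" "\<mu> < 5/4"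
  show "rapidly_decreasing (\<lambda>\<xi>. F (Complex \<mu> \<xi>))"
  proof (cases "\<mu> < 1/4")
    case True
    show ?thesis
    proof (rule rapidly_decreasing_linear_factor[where w = "1/4"])
      show "rapidly_decreasing (\<lambda>\<xi>. mellin K_plus (Complex \<mu> \<xi>))"
        using \<mu> True by (intro rapidly_decreasing_mellin_kernel[where d = 1]) (auto simp: degree_linear_poly_le)
    qed (use \<mu> True continuation_K_plus in auto)
  next
    case False
    show ?thesis
    proof (rule rapidly_decreasing_linear_factor[where w = "-1/4"])
      show "rapidly_decreasing (\<lambda>\<xi>. mellin K_minus (Complex \<mu> \<xi>))"
        using \<mu> False by (intro rapidly_decreasing_mellin_kernel[where d = 1]) (auto simp: degree_linear_poly_le)
    qed (use \<mu> False continuation_K_minus in auto)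
  qed
qed auto

end

end

section \<open>The kernel \<open>K\<^sub>\<alpha>\<close>\<close>

lemma quadratic_kernel_cos:
  assumes "0 < \<alpha>" "\<alpha> < pi"
  shows "quadratic_kernel (2 * cos (2 * \<alpha>))"
proof
  show "-2 \<le> 2 * cos (2 * \<alpha>)" by simp
  have "0 < sin \<alpha>" using assms by (rule sin_gt_zero)
  then show "2 * cos (2 * \<alpha>) < 2" by (simp add: cos_double_sin)
qed

lemma Kfrak_eq_kernel:
  assumes "0 < \<alpha>" "\<alpha> < pi" "0 < t"
  shows "Kfrak \<alpha> t = quadratic_kernel.kernel (2 * cos (2 * \<alpha>)) (1/4) (-1/4) 1 t"
proof -
  interpret quadratic_kernel "2 * cos (2 * \<alpha>)"
    using assms(1,2) by (rule quadratic_kernel_cos)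
  have "4 * (sin \<alpha>)\<^sup>2 + (sqrt t - 1 / sqrt t)\<^sup>2 = 4 * (sin \<alpha>)\<^sup>2 + t - 2 + 1 / t"
    using assms(3) by (simp add: power2_diff power_divide)
  also have "\<dots> = (t\<^sup>2 - 2 * cos (2 * \<alpha>) * t + 1) / t"
    unfolding cos_double_sin using assms(3) by (simp add: field_simps power2_eq_square)
  also have "\<dots> = poly qpoly t / t"
    by (simp only: poly_qpoly)
  finally have "Kfrak \<alpha> t = (poly qpoly t / t) powr (-1/4)"
    by (simp add: Kfrak_def)
  also have "\<dots> = t powr (1/4) * poly qpoly t powr (-1/4)"
    using assms(3) qpoly_pos[of t] by (simp add: powr_divide powr_minus_divide)
  finally show ?thesis by (simp add: kernel_def)
qed

theorem corollary2:
  fixes \<alpha> :: real and Khat :: "complex \<Rightarrow> complex"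
  assumes "0 < \<alpha>" "\<alpha> < pi"
    and "Khat holomorphic_on (- Sfrak)"
    and "\<And>s. \<bar>Re s\<bar> < 1/4 \<Longrightarrow> Khat s = mellinK \<alpha> s"
  shows "\<forall>\<mu>::real. \<forall>p::real. p \<ge> 0 \<longrightarrow>
           ((\<lambda>\<xi>. (cmod (Khat (Complex \<mu> \<xi>)))\<^sup>2 * \<bar>\<xi>\<bar> powr (2 * p)) \<longlongrightarrow> 0) at_top \<and>
           ((\<lambda>\<xi>. (cmod (Khat (Complex \<mu> (- \<xi>))))\<^sup>2 * \<bar>\<xi>\<bar> powr (2 * p)) \<longlongrightarrow> 0) at_top"
proof (intro allI impI conjI)
  interpret quadratic_kernel "2 * cos (2 * \<alpha>)"
    using assms(1,2) by (rule quadratic_kernel_cos)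
  fix \<mu> p :: real assume "0 \<le> p"
  have decay: "rapidly_decreasing (\<lambda>\<xi>. Khat (Complex \<mu> \<xi>))"
  proof (rule rapidly_decreasing_continuation)
    show "Khat holomorphic_on {s. Im s \<noteq> 0}"
      using assms(3) by (rule holomorphic_on_subset) (auto simp: Sfrak_def)
    fix s assume "-1/4 < Re s" "Re s < 1/4"
    then have "Khat s = mellin (Kfrak \<alpha>) s"
      using assms(4) by (simp add: mellinK_def mellin_def mellin_integrand_def)
    also have "\<dots> = mellin K s"
      using assms(1,2) by (intro mellin_cong Kfrak_eq_kernel)
    finally show "Khat s = mellin K s" .
  qed
  show "((\<lambda>\<xi>. (cmod (Khat (Complex \<mu> \<xi>)))\<^sup>2 * \<bar>\<xi>\<bar> powr (2 * p)) \<longlongrightarrow> 0) at_top"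
    using rapidly_decreasing_tendsto_0[OF decay \<open>0 \<le> p\<close>] .
  show "((\<lambda>\<xi>. (cmod (Khat (Complex \<mu> (- \<xi>))))\<^sup>2 * \<bar>\<xi>\<bar> powr (2 * p)) \<longlongrightarrow> 0) at_top"
    using rapidly_decreasing_tendsto_0[OF rapidly_decreasing_reflect[OF decay] \<open>0 \<le> p\<close>] .
qed

end
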